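(* Let $w$ be a weakly cyclically reduced word on $\{\alpha_n^{\pm1},\dots,\alpha_1^{\pm1},\beta^{\pm1}\}$ in which some letter $\alpha_i^{\pm1}$ occurs (i.e. $w\notin\langle\beta\rangle$). For every finite subset $F$ of the vertex set $X$ of the pre-graph $G_0$, there exists an extension $G$ of $G_0$ such that the cycle $C(w,v_0)$ embeds in $G$ and its image contains no vertex of $F$.
   Context: A graph consists of a vertex set $V$, an edge set $E$, a fixed-point-free involution $e\mapsto\bar e$ on $E$, and maps $i,t:E\to V$ with $i(\bar e)=t(e)$. A labeling on $S^{\pm1}$ is a map $l:E\to S^{\pm1}$ with $l(\bar e)=l(e)^{-1}$. A labeled graph is well-labeled if $i(e)=i(e')$ and $l(e)=l(e')$ imply $e=e'$. A homomorphism of labeled graphs maps vertices to vertices and edges to edges preserving $i$, $t$ and labels; an embedding is an injective homomorphism. A word $w_m\cdots w_1$ is reduced if $w_{j+1}\neq w_j^{-1}$ for all $j$, and weakly cyclically reduced if moreover $w_m\neq w_1^{-1}$ (equality $w_m=w_1$ is allowed). For such $w$, the cycle $C(w,v_0)$ is the labeled graph with $m$ distinct vertices $v_0,\dots,v_{m-1}$ and directed edges $e_1,\dots,e_m$ (with their inverses), $e_j$ going from $v_{j-1}$ to $v_j$ (indices mod $m$, so $t(e_m)=v_0$) with label $w_j$. Let $X$ be an infinite countable set and $\beta$ a permutation of $X$ acting simply transitively. The pre-graph $G_0$ has vertex set $X$ and for each $x\in X$ one directed edge from $x$ to $\beta(x)$ labeled $\beta$ (with its inverse labeled $\beta^{-1}$).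 An extension of $G_0$ is a well-labeled graph labeled on $\{\alpha_n^{\pm1},\dots,\alpha_1^{\pm1},\beta^{\pm1}\}$ containing $G_0$ and with vertex set exactly $X$. *)

theory Defs
  imports Main "HOL-Library.Countable_Set"
begin

text \<open>Generators: Beta is beta, Alpha i is alpha_i (meaningful for 1 <= i <= n).
  A letter is a generator together with an exponent sign (True = +1, False = -1).\<close>

datatype gen = Alpha nat | Beta

type_synonym letter = "gen \<times> bool"

definition linv :: "letter \<Rightarrow> letter" where
  "linv a = (fst a, \<not> snd a)"

definition alphabet :: "nat \<Rightarrow> letter set" where
  "alphabet n = {(Alpha i, s) | i s. 1 \<le> i \<and> i \<le> n} \<union> {(Beta, s) | s. True}"

text \<open>A word w = w_m ... w_1 is represented by the list [w_m, ..., w_1] in written order;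
  thus the letter w_j (1 <= j <= m) is  w ! (length w - j).\<close>

definition wlet :: "letter list \<Rightarrow> nat \<Rightarrow> letter" where
  "wlet w j = w ! (length w - j)"

definition reduced_word :: "letter list \<Rightarrow> bool" where
  "reduced_word w \<longleftrightarrow> (\<forall>j. 1 \<le> j \<and> j < length w \<longrightarrow> wlet w (Suc j) \<noteq> linv (wlet w j))"

definition weakly_cyclically_reduced :: "letter list \<Rightarrow> bool" where
  "weakly_cyclically_reduced w \<longleftrightarrow> w \<noteq> [] \<and> reduced_word w \<and>
     wlet w (length w) \<noteq> linv (wlet w 1)"

record ('v, 'e) lgraph =
  verts :: "'v set"
  edges :: "'e set"
  bar :: "'e \<Rightarrow> 'e"
  src :: "'e \<Rightarrow> 'v"
  tgt :: "'e \<Rightarrow> 'v"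
  lab :: "'e \<Rightarrow> letter"

definition is_lgraph :: "('v, 'e) lgraph \<Rightarrow> bool" where
  "is_lgraph G \<longleftrightarrow> (\<forall>e \<in> edges G.
      bar G e \<in> edges G \<and> bar G (bar G e) = e \<and> bar G e \<noteq> e \<and>
      src G e \<in> verts G \<and> tgt G e \<in> verts G \<and> src G (bar G e) = tgt G e \<and>
      lab G (bar G e) = linv (lab G e))"

definition labeled_on :: "nat \<Rightarrow> ('v, 'e) lgraph \<Rightarrow> bool" where
  "labeled_on n G \<longleftrightarrow> (\<forall>e \<in> edges G. lab G e \<in> alphabet n)"

definition well_labeled :: "('v, 'e) lgraph \<Rightarrow> bool" where
  "well_labeled G \<longleftrightarrow> (\<forall>e \<in> edges G. \<forall>e' \<in> edges G.
      src G e = src G e' \<and> lab G e = lab G e' \<longrightarrow> e = e')"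

definition lhom :: "('v, 'e) lgraph \<Rightarrow> ('w, 'f) lgraph \<Rightarrow> ('v \<Rightarrow> 'w) \<Rightarrow> ('e \<Rightarrow> 'f) \<Rightarrow> bool" where
  "lhom G H f g \<longleftrightarrow> f ` verts G \<subseteq> verts H \<and> g ` edges G \<subseteq> edges H \<and>
     (\<forall>e \<in> edges G. src H (g e) = f (src G e) \<and> tgt H (g e) = f (tgt G e) \<and>
        lab H (g e) = lab G e \<and> g (bar G e) = bar H (g e))"

definition lembedding :: "('v, 'e) lgraph \<Rightarrow> ('w, 'f) lgraph \<Rightarrow> ('v \<Rightarrow> 'w) \<Rightarrow> ('e \<Rightarrow> 'f) \<Rightarrow> bool" where
  "lembedding G H f g \<longleftrightarrow> lhom G H f g \<and> inj_on f (verts G) \<and> inj_on g (edges G)"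

text \<open>Vertices v_0..v_{m-1} are 0..m-1 (v_0 = 0); edge e_j (1 <= j <= m) is (j, True),
  going from v_{j-1} to v_{j mod m} with label w_j; its inverse is (j, False).\<close>

definition cycle_graph :: "letter list \<Rightarrow> (nat, nat \<times> bool) lgraph" where
  "cycle_graph w = (let m = length w in
     \<lparr> verts = {..<m},
       edges = {1..m} \<times> UNIV,
       bar = (\<lambda>(j, b). (j, \<not> b)),
       src = (\<lambda>(j, b). if b then j - 1 else j mod m),
       tgt = (\<lambda>(j, b). if b then j mod m else j - 1),
       lab = (\<lambda>(j, b). if b then wlet w j else linv (wlet w j)) \<rparr>)"

definition beta_pow :: "'x set \<Rightarrow> ('x \<Rightarrow> 'x) \<Rightarrow> int \<Rightarrow> 'x \<Rightarrow> 'x" where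
  "beta_pow X \<beta> k = (if 0 \<le> k then \<beta> ^^ nat k else inv_into X \<beta> ^^ nat (- k))"

definition simply_transitive :: "'x set \<Rightarrow> ('x \<Rightarrow> 'x) \<Rightarrow> bool" where
  "simply_transitive X \<beta> \<longleftrightarrow> (\<forall>x \<in> X. \<forall>y \<in> X. \<exists>!k::int. beta_pow X \<beta> k x = y)"

definition pre_graph :: "'x set \<Rightarrow> ('x \<Rightarrow> 'x) \<Rightarrow> ('x, 'x \<times> bool) lgraph" where
  "pre_graph X \<beta> =
     \<lparr> verts = X,
       edges = X \<times> UNIV,
       bar = (\<lambda>(x, b). (x, \<not> b)),
       src = (\<lambda>(x, b). if b then x else \<beta> x),
       tgt = (\<lambda>(x, b). if b then \<beta> x else x),
       lab = (\<lambda>(x, b). (Beta, b)) \<rparr>"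

definition extension :: "nat \<Rightarrow> 'x set \<Rightarrow> ('x \<Rightarrow> 'x) \<Rightarrow> ('x, 'e) lgraph \<Rightarrow> bool" where
  "extension n X \<beta> G \<longleftrightarrow> is_lgraph G \<and> labeled_on n G \<and> well_labeled G \<and>
     verts G = X \<and> (\<exists>g. lembedding (pre_graph X \<beta>) G id g)"

end

theory Submission
  imports Defs
begin

text \<open>Cut the cycle \<open>C(w, v\<^sub>0)\<close> at an \<open>\<alpha>\<close>-edge and walk along the resulting path, giving
  every vertex an integer height: a \<open>\<beta>\<^sup>\<plusminus>\<^sup>1\<close>-edge changes the height by \<open>\<plusminus>1\<close>, an \<open>\<alpha>\<close>-edge
  raises it by \<open>|w|\<close>. As \<open>w\<close> is weakly cyclically reduced, all \<open>\<beta>\<close>-edges between two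
  \<open>\<alpha>\<close>-edges carry the same letter, so the heights are pairwise distinct. Placing the
  vertex of height \<open>k\<close> at \<open>\<beta>\<^sup>c\<^sup>+\<^sup>k(x\<^sub>0)\<close>, with a shift \<open>c\<close> that keeps every vertex out
  of the finite set \<open>F\<close>, sends the \<open>\<beta>\<close>-edges of the cycle onto edges of \<open>G\<^sub>0\<close>. Adding the
  images of the \<open>\<alpha>\<close>-edges to \<open>G\<^sub>0\<close> gives the extension; it stays well-labeled because the
  placement is injective and the cycle itself is well-labeled.\<close>

lemma linv_linv [simp]: "linv (linv l) = l"
  by (simp add: linv_def)

lemma linv_neq [simp]: "linv l \<noteq> l"
  by (simp add: linv_def prod_eq_iff)

lemma fst_linv [simp]: "fst (linv l) = fst l"
  by (simp add: linv_def)

lemma alphabet_linv: "l \<in> alphabet n \<Longrightarrow> linv l \<in> alphabet n"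
  by (auto simp: alphabet_def linv_def)

lemma Beta_letter_eqI: "fst a = Beta \<Longrightarrow> fst b = Beta \<Longrightarrow> b \<noteq> linv a \<Longrightarrow> b = a"
  by (cases a; cases b) (auto simp: linv_def)

definition letter_exp :: "letter \<Rightarrow> int" where
  "letter_exp l = (if snd l then 1 else -1)"

lemma letter_exp_linv [simp]: "letter_exp (linv l) = - letter_exp l"
  by (simp add: letter_exp_def linv_def)

lemma weakly_cyclically_reduced_cyclic:
  assumes "weakly_cyclically_reduced w"
  shows "wlet w (Suc (Suc i mod length w)) \<noteq> linv (wlet w (Suc (i mod length w)))"
proof -
  define m where "m = length w"
  have m: "0 < m" and red: "reduced_word w" and wrap: "wlet w m \<noteq> linv (wlet w 1)"
    using assms by (auto simp: weakly_cyclically_reduced_def m_def)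
  have "Suc i mod m = Suc (i mod m) mod m"
    by (simp add: mod_Suc_eq)
  moreover have "i mod m < m"
    using m by simp
  ultimately consider "Suc i mod m = Suc (i mod m)" "Suc (i mod m) < m"
    | "Suc i mod m = 0" "Suc (i mod m) = m"
    by (metis Suc_lessI mod_self mod_less)
  then show ?thesis
  proof cases
    case 1
    then show ?thesis
      using red by (simp add: reduced_word_def m_def)
  next
    case 2
    then show ?thesis
      using wrap by (auto simp: m_def)
  qed
qed

lemma wlet_in_set: "1 \<le> j \<Longrightarrow> j \<le> length w \<Longrightarrow> wlet w j \<in> set w"
  by (simp add: wlet_def)

lemma cycle_graph_simps:
  "verts (cycle_graph w) = {..<length w}"
  "edges (cycle_graph w) = {1..length w} \<times> UNIV"
  "bar (cycle_graph w) (j, b) = (j, \<not> b)"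
  "src (cycle_graph w) (j, b) = (if b then j - 1 else j mod length w)"
  "tgt (cycle_graph w) (j, b) = (if b then j mod length w else j - 1)"
  "lab (cycle_graph w) (j, b) = (if b then wlet w j else linv (wlet w j))"
  by (simp_all add: cycle_graph_def Let_def)

lemma is_lgraph_cycle_graph: "is_lgraph (cycle_graph w)"
  by (auto simp: is_lgraph_def cycle_graph_simps intro!: mod_less_divisor)

lemma labeled_on_cycle_graph: "set w \<subseteq> alphabet n \<Longrightarrow> labeled_on n (cycle_graph w)"
  using wlet_in_set[of _ w] by (auto simp: labeled_on_def cycle_graph_simps intro!: alphabet_linv)

lemma well_labeled_cycle_graph:
  assumes "weakly_cyclically_reduced w"
  shows "well_labeled (cycle_graph w)"
  unfolding well_labeled_def
proof (intro ballI impI)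
  fix e e'
  assume "e \<in> edges (cycle_graph w)" "e' \<in> edges (cycle_graph w)"
    and same: "src (cycle_graph w) e = src (cycle_graph w) e' \<and> lab (cycle_graph w) e = lab (cycle_graph w) e'"
  then obtain j b j' b' where e: "e = (j, b)" "e' = (j', b')"
    and j: "1 \<le> j" "j \<le> length w" and j': "1 \<le> j'" "j' \<le> length w"
    by (auto simp: cycle_graph_simps)
  have src: "(if b then j - 1 else j mod length w) = (if b' then j' - 1 else j' mod length w)"
    and lab: "(if b then wlet w j else linv (wlet w j)) = (if b' then wlet w j' else linv (wlet w j'))"
    using same by (simp_all add: e cycle_graph_simps)
  have mod_inj: "k mod length w = k' mod length w \<Longrightarrow> k = k'"
    if "1 \<le> k" "k \<le> length w" "1 \<le> k'" "k' \<le> length w" for k k'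
    using that by (metis le_neq_implies_less mod_less mod_self not_one_le_zero)
  have no_backtrack: False
    if "1 \<le> k" "k \<le> length w" "k' = Suc (k mod length w)"
      "wlet w k' = linv (wlet w k)" for k k'
    using weakly_cyclically_reduced_cyclic[OF assms, of "k - 1"] that by (simp add: Suc_diff_le)
  have "j = j' \<and> b = b'"
  proof (cases b; cases b')
    assume "b" "b'"
    then show ?thesis
      using src j j' by simp
  next
    assume "b" "\<not> b'"
    then have "j = Suc (j' mod length w)" "wlet w j = linv (wlet w j')"
      using src lab j(1) by auto
    then show ?thesis
      using no_backtrack[OF j'] by blast
  next
    assume "\<not> b" "b'"
    then have "j' = Suc (j mod length w)" "wlet w j' = linv (wlet w j)"
      using src lab j'(1) by (auto dest: arg_cong[of _ _ linv])
    then show ?thesis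
      using no_backtrack[OF j] by blast
  next
    assume "\<not> b" "\<not> b'"
    then show ?thesis
      using src mod_inj[OF j j'] by simp
  qed
  then show "e = e'"
    using e by simp
qed

definition height_step :: "int \<Rightarrow> letter \<Rightarrow> int" where
  "height_step K l = (if fst l = Beta then letter_exp l else K)"

definition path_height :: "int \<Rightarrow> (nat \<Rightarrow> letter) \<Rightarrow> nat \<Rightarrow> int" where
  "path_height K u t = (\<Sum>k<t. height_step K (u k))"

lemma path_height_Suc: "path_height K u (Suc t) = path_height K u t + height_step K (u t)"
  by (simp add: path_height_def)

lemma path_height_diff:
  "t \<le> t' \<Longrightarrow> path_height K u t' = path_height K u t + (\<Sum>k\<in>{t..<t'}. height_step K (u k))"
  unfolding path_height_def lessThan_atLeast0 by (simp add: sum.atLeastLessThan_concat)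

lemma Beta_run_constant:
  assumes Beta: "\<And>k. t \<le> k \<Longrightarrow> k < t' \<Longrightarrow> fst (u k) = Beta"
    and reduced: "\<And>k. Suc k < t' \<Longrightarrow> u (Suc k) \<noteq> linv (u k)"
  shows "t \<le> k \<Longrightarrow> k < t' \<Longrightarrow> u k = u t"
proof (induction k rule: dec_induct)
  case (step k)
  then show ?case
    using Beta_letter_eqI[of "u k" "u (Suc k)"] Beta reduced[of k] by simp
qed simp

lemma inj_on_path_height:
  assumes reduced: "\<And>k. Suc k < N \<Longrightarrow> u (Suc k) \<noteq> linv (u k)" and "int N < K"
  shows "inj_on (path_height K u) {..N}"
proof (rule linorder_inj_onI')
  fix t t' assume "t \<in> {..N}" "t' \<in> {..N}" "t < t'"
  define D where "D = (\<Sum>k\<in>{t..<t'}. height_step K (u k))"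
  have "D \<noteq> 0"
  proof (cases "\<forall>k\<in>{t..<t'}. fst (u k) = Beta")
    case True
    have run: "u k = u t" if "k \<in> {t..<t'}" for k
    proof (rule Beta_run_constant)
      show "fst (u k) = Beta" if "t \<le> k" "k < t'" for k
        using True that by simp
      show "u (Suc k) \<noteq> linv (u k)" if "Suc k < t'" for k
        using reduced that \<open>t' \<in> {..N}\<close> by simp
    qed (use that in auto)
    have "height_step K (u k) = letter_exp (u t)" if "k \<in> {t..<t'}" for k
      using run[OF that] True that by (simp add: height_step_def)
    then have "D = int (t' - t) * letter_exp (u t)"
      by (simp add: D_def)
    then show ?thesis
      using \<open>t < t'\<close> by (simp add: letter_exp_def)
  next
    case False
    then obtain k0 where k0: "k0 \<in> {t..<t'}" "fst (u k0) \<noteq> Beta"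
      by blast
    have "height_step K l \<ge> -1" for l
      using \<open>int N < K\<close> by (simp add: height_step_def letter_exp_def)
    then have "- int (card ({t..<t'} - {k0})) \<le> (\<Sum>k\<in>{t..<t'} - {k0}. height_step K (u k))"
      using sum_bounded_below[of "{t..<t'} - {k0}" "-1" "\<lambda>k. height_step K (u k)"] by simp
    moreover have "D = K + (\<Sum>k\<in>{t..<t'} - {k0}. height_step K (u k))"
      using k0 by (simp add: D_def height_step_def sum.remove)
    moreover have "card ({t..<t'} - {k0}) < N"
      using k0 \<open>t' \<in> {..N}\<close> by (simp; linarith)
    ultimately show ?thesis
      using \<open>int N < K\<close> by linarith
  qed
  then show "path_height K u t \<noteq> path_height K u t'"
    using path_height_diff[of t t' K u] \<open>t < t'\<close> by (simp add: D_def)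
qed

lemma mod_rotate_inverse:
  fixes i d s m :: nat
  assumes "i < m" "s + d = m"
  shows "(s + (i + d) mod m) mod m = i"
proof -
  have "(s + (i + d) mod m) mod m = (s + (i + d)) mod m"
    by (rule mod_add_right_eq)
  also have "s + (i + d) = i + m"
    using assms(2) by simp
  finally show ?thesis
    using assms(1) by simp
qed

lemma mod_rotate_Suc:
  fixes i d p m :: nat
  assumes "i < m" "p < m" "i \<noteq> p" "Suc p + d = m"
  shows "(Suc i mod m + d) mod m = Suc ((i + d) mod m)"
proof -
  have "(i + d) mod m \<noteq> m - 1"
  proof
    assume "(i + d) mod m = m - 1"
    then have "i = (Suc p + (m - 1)) mod m"
      using mod_rotate_inverse[OF assms(1,4)] by simp
    also have "\<dots> = p"
      using assms(2) by (simp add: Suc_diff_Suc)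
    finally show False
      using assms(3) by simp
  qed
  then have "Suc ((i + d) mod m) < m"
    using mod_less_divisor[of m "i + d"] assms(1) by linarith
  moreover have "(Suc i mod m + d) mod m = Suc ((i + d) mod m) mod m"
    by (simp add: mod_Suc_eq mod_add_left_eq)
  ultimately show ?thesis
    by simp
qed

lemma cycle_vertex_height:
  assumes wcr: "weakly_cyclically_reduced w" and alpha: "\<exists>a \<in> set w. fst a \<noteq> Beta"
  obtains h :: "nat \<Rightarrow> int" where "inj_on h {..<length w}"
    "\<And>i. i < length w \<Longrightarrow> fst (wlet w (Suc i)) = Beta \<Longrightarrow>
      h (Suc i mod length w) = h i + letter_exp (wlet w (Suc i))"
proof -
  define m where "m = length w"
  obtain p where p: "p < m" "fst (wlet w (Suc p)) \<noteq> Beta"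
  proof -
    obtain k where "k < m" "fst (w ! k) \<noteq> Beta"
      using alpha by (auto simp: in_set_conv_nth m_def)
    then show ?thesis
      using that[of "m - Suc k"] by (simp add: wlet_def m_def Suc_diff_Suc)
  qed
  \<comment> \<open>Cut at the \<open>\<alpha>\<close>-edge from \<open>p\<close> to \<open>p + 1\<close>: the path starts at vertex \<open>(p + 1) mod m\<close>,
    \<open>u t\<close> is its \<open>t\<close>-th letter and \<open>pos i\<close> the position of vertex \<open>i\<close> on it.\<close>
  define d where "d = m - Suc p"
  define u where "u t = wlet w (Suc ((Suc p + t) mod m))" for t
  define pos where "pos i = (i + d) mod m" for i
  have d: "Suc p + d = m"
    using p by (simp add: d_def)
  have pos_inverse: "(Suc p + pos i) mod m = i" if "i < m" for i
    using mod_rotate_inverse[OF that d] by (simp add: pos_def)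
  have inj_height: "inj_on (path_height (int m) u) {..m - 1}"
  proof (rule inj_on_path_height)
    show "u (Suc k) \<noteq> linv (u k)" for k
      using weakly_cyclically_reduced_cyclic[OF wcr, of "Suc p + k"] by (simp add: u_def m_def)
  qed (use p in simp)
  have inj_pos: "inj_on pos {..<m}"
  proof (rule inj_onI)
    fix i j assume "i \<in> {..<m}" "j \<in> {..<m}" "pos i = pos j"
    then show "i = j"
      using pos_inverse[of i] pos_inverse[of j] by simp
  qed
  have pos_range: "pos ` {..<m} \<subseteq> {..m - 1}"
    using p by (simp add: image_subset_iff pos_def less_Suc_eq_le[symmetric])
  have step: "path_height (int m) u (pos (Suc i mod m)) =
      path_height (int m) u (pos i) + letter_exp (wlet w (Suc i))"
    if "i < m" "fst (wlet w (Suc i)) = Beta" for i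
  proof -
    have "i \<noteq> p"
      using p that by auto
    then have "pos (Suc i mod m) = Suc (pos i)"
      using mod_rotate_Suc[OF that(1) p(1) _ d] by (simp add: pos_def)
    moreover have "u (pos i) = wlet w (Suc i)"
      using pos_inverse[OF that(1)] by (simp add: u_def)
    ultimately show ?thesis
      using that by (simp add: path_height_Suc height_step_def)
  qed
  show ?thesis
  proof (rule that[of "path_height (int m) u \<circ> pos"])
    show "inj_on (path_height (int m) u \<circ> pos) {..<length w}"
      using comp_inj_on[OF inj_pos inj_on_subset[OF inj_height pos_range]] by (simp add: m_def)
  qed (use step in \<open>simp add: m_def\<close>)
qed

lemma cycle_graph_height:
  assumes "weakly_cyclically_reduced w" "\<exists>a \<in> set w. fst a \<noteq> Beta"
  obtains h :: "nat \<Rightarrow> int" where "inj_on h (verts (cycle_graph w))"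
    "\<And>e. e \<in> edges (cycle_graph w) \<Longrightarrow> fst (lab (cycle_graph w) e) = Beta \<Longrightarrow>
       h (tgt (cycle_graph w) e) = h (src (cycle_graph w) e) + letter_exp (lab (cycle_graph w) e)"
proof -
  obtain h where inj: "inj_on h {..<length w}"
    and forward: "\<And>i. i < length w \<Longrightarrow> fst (wlet w (Suc i)) = Beta \<Longrightarrow>
      h (Suc i mod length w) = h i + letter_exp (wlet w (Suc i))"
    using cycle_vertex_height[OF assms] by blast
  show ?thesis
  proof (rule that)
    show "inj_on h (verts (cycle_graph w))"
      using inj by (simp add: cycle_graph_simps)
  next
    fix e assume e: "e \<in> edges (cycle_graph w)" and Beta: "fst (lab (cycle_graph w) e) = Beta"
    obtain j b where jb: "e = (j, b)" "1 \<le> j" "j \<le> length w"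
      using e by (auto simp: cycle_graph_simps)
    define i where "i = j - 1"
    have "e = (Suc i, b)" "i < length w"
      using jb by (auto simp: i_def)
    then show "h (tgt (cycle_graph w) e) = h (src (cycle_graph w) e) + letter_exp (lab (cycle_graph w) e)"
      using Beta forward[of i] by (cases b) (simp_all add: cycle_graph_simps)
  qed
qed

lemma beta_pow_in:
  assumes "bij_betw \<beta> X X" "x \<in> X"
  shows "beta_pow X \<beta> k x \<in> X"
proof -
  have "(\<beta> ^^ n) x \<in> X" for n
    by (induction n) (use assms in \<open>auto dest: bij_betwE\<close>)
  moreover have "(inv_into X \<beta> ^^ n) x \<in> X" for n
    by (induction n) (use assms in \<open>auto simp: bij_betw_def intro: inv_into_into\<close>)
  ultimately show ?thesis
    by (simp add: beta_pow_def)
qed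

lemma beta_pow_0 [simp]: "beta_pow X \<beta> 0 x = x"
  by (simp add: beta_pow_def)

lemma beta_pow_1 [simp]: "beta_pow X \<beta> 1 x = \<beta> x"
  by (simp add: beta_pow_def)

lemma beta_pow_minus_1 [simp]: "beta_pow X \<beta> (-1) x = inv_into X \<beta> x"
  by (simp add: beta_pow_def)

lemma beta_pow_succ:
  assumes "bij_betw \<beta> X X" "x \<in> X"
  shows "beta_pow X \<beta> (k + 1) x = \<beta> (beta_pow X \<beta> k x)"
proof (cases "0 \<le> k")
  case True
  then have "nat (k + 1) = Suc (nat k)"
    by simp
  then show ?thesis
    using True by (simp add: beta_pow_def)
next
  case False
  have "beta_pow X \<beta> k x = inv_into X \<beta> (beta_pow X \<beta> (k + 1) x)"
  proof (cases "k = -1")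
    case False
    with \<open>\<not> 0 \<le> k\<close> have "nat (- k) = Suc (nat (- (k + 1)))" "\<not> 0 \<le> k + 1"
      by simp_all
    then show ?thesis
      using \<open>\<not> 0 \<le> k\<close> by (simp add: beta_pow_def)
  qed (simp add: beta_pow_def)
  moreover have "beta_pow X \<beta> (k + 1) x \<in> \<beta> ` X"
    using beta_pow_in[OF assms] assms(1) by (simp add: bij_betw_def)
  ultimately show ?thesis
    by (simp add: f_inv_into_f)
qed

lemma beta_pow_pred:
  assumes "bij_betw \<beta> X X" "x \<in> X"
  shows "beta_pow X \<beta> (k - 1) x = inv_into X \<beta> (beta_pow X \<beta> k x)"
proof -
  have "beta_pow X \<beta> k x = \<beta> (beta_pow X \<beta> (k - 1) x)"
    using beta_pow_succ[OF assms, of "k - 1"] by simp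
  moreover have "inj_on \<beta> X"
    using assms(1) by (simp add: bij_betw_def)
  ultimately show ?thesis
    using beta_pow_in[OF assms] by (simp add: inv_into_f_f)
qed

lemma beta_pow_add:
  assumes bij: "bij_betw \<beta> X X" and x: "x \<in> X"
  shows "beta_pow X \<beta> (a + b) x = beta_pow X \<beta> a (beta_pow X \<beta> b x)"
proof (induction a rule: int_induct[where k = 0])
  case (step1 a)
  have "beta_pow X \<beta> (a + 1 + b) x = \<beta> (beta_pow X \<beta> (a + b) x)"
    using beta_pow_succ[OF bij x, of "a + b"] by (simp add: ac_simps)
  also have "\<dots> = beta_pow X \<beta> (a + 1) (beta_pow X \<beta> b x)"
    using step1.IH beta_pow_succ[OF bij beta_pow_in[OF bij x], of a] by simp
  finally show ?case .
next
  case (step2 a)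
  have "beta_pow X \<beta> (a - 1 + b) x = inv_into X \<beta> (beta_pow X \<beta> (a + b) x)"
    using beta_pow_pred[OF bij x, of "a + b"] by (simp add: algebra_simps)
  also have "\<dots> = beta_pow X \<beta> (a - 1) (beta_pow X \<beta> b x)"
    using step2.IH beta_pow_pred[OF bij beta_pow_in[OF bij x], of a] by simp
  finally show ?case .
qed simp

lemma inj_beta_pow:
  assumes "bij_betw \<beta> X X" "simply_transitive X \<beta>" "x \<in> X"
  shows "inj (\<lambda>k. beta_pow X \<beta> k x)"
proof (rule injI)
  fix k l assume eq: "beta_pow X \<beta> k x = beta_pow X \<beta> l x"
  have "beta_pow X \<beta> l x \<in> X"
    using beta_pow_in[OF assms(1,3)] .
  then have "\<exists>!k. beta_pow X \<beta> k x = beta_pow X \<beta> l x"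
    using assms(2,3) unfolding simply_transitive_def by blast
  then show "k = l"
    using eq by blast
qed

lemma inj_on_orbit_map:
  assumes "bij_betw \<beta> X X" "simply_transitive X \<beta>" "x \<in> X" "inj_on h V"
  shows "inj_on (\<lambda>v. beta_pow X \<beta> (c + h v) x) V"
proof (rule inj_onI)
  fix u v assume uv: "u \<in> V" "v \<in> V"
    and eq: "beta_pow X \<beta> (c + h u) x = beta_pow X \<beta> (c + h v) x"
  have "c + h u = c + h v"
    using eq by (rule injD[OF inj_beta_pow[OF assms(1-3)]])
  then show "u = v"
    using inj_onD[OF assms(4) _ uv] by simp
qed

lemma is_lgraphD:
  assumes "is_lgraph H" "e \<in> edges H"
  shows "bar H e \<in> edges H" "src H e \<in> verts H" "tgt H e \<in> verts H"
    "src H (bar H e) = tgt H e" "tgt H (bar H e) = src H e" "lab H (bar H e) = linv (lab H e)"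
  using assms unfolding is_lgraph_def by metis+

text \<open>Edges are named by their source and label.\<close>

definition letter_graph ::
    "'x set \<Rightarrow> ('x \<times> letter) set \<Rightarrow> ('x \<times> letter \<Rightarrow> 'x) \<Rightarrow> ('x, 'x \<times> letter) lgraph" where
  "letter_graph V E T = \<lparr> verts = V, edges = E, bar = (\<lambda>p. (T p, linv (snd p))),
     src = fst, tgt = T, lab = snd \<rparr>"

lemma well_labeled_letter_graph: "well_labeled (letter_graph V E T)"
  by (auto simp: well_labeled_def letter_graph_def prod_eq_iff)

lemma is_lgraph_letter_graph:
  assumes "\<And>p. p \<in> E \<Longrightarrow>
    fst p \<in> V \<and> T p \<in> V \<and> (T p, linv (snd p)) \<in> E \<and> T (T p, linv (snd p)) = fst p"
  shows "is_lgraph (letter_graph V E T)"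
  using assms by (auto simp: is_lgraph_def letter_graph_def)

definition placed_edge :: "('v, 'e) lgraph \<Rightarrow> ('v \<Rightarrow> 'x) \<Rightarrow> 'e \<Rightarrow> 'x \<times> letter" where
  "placed_edge H f e = (f (src H e), lab H e)"

definition placed_target ::
    "'x set \<Rightarrow> ('x \<Rightarrow> 'x) \<Rightarrow> ('v, 'e) lgraph \<Rightarrow> ('v \<Rightarrow> 'x) \<Rightarrow> 'x \<times> letter \<Rightarrow> 'x" where
  "placed_target X \<beta> H f p = (if fst (snd p) = Beta then beta_pow X \<beta> (letter_exp (snd p)) (fst p)
     else f (tgt H (inv_into (edges H) (placed_edge H f) p)))"

definition placed_graph ::
    "'x set \<Rightarrow> ('x \<Rightarrow> 'x) \<Rightarrow> ('v, 'e) lgraph \<Rightarrow> ('v \<Rightarrow> 'x) \<Rightarrow> ('x, 'x \<times> letter) lgraph" where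
  "placed_graph X \<beta> H f = letter_graph X (X \<times> ({Beta} \<times> UNIV) \<union> placed_edge H f ` edges H)
     (placed_target X \<beta> H f)"

context
  fixes X :: "'x set" and \<beta> :: "'x \<Rightarrow> 'x" and H :: "('v, 'e) lgraph" and f :: "'v \<Rightarrow> 'x"
  assumes bij: "bij_betw \<beta> X X"
    and H: "is_lgraph H" "well_labeled H"
    and f: "inj_on f (verts H)" "f ` verts H \<subseteq> X"
    and Beta_edges: "\<And>e. e \<in> edges H \<Longrightarrow> fst (lab H e) = Beta \<Longrightarrow>
      f (tgt H e) = beta_pow X \<beta> (letter_exp (lab H e)) (f (src H e))"
begin

lemma inj_on_placed_edge: "inj_on (placed_edge H f) (edges H)"
  using H(2) f(1) is_lgraphD(2)[OF H(1)]
  by (auto simp: inj_on_def placed_edge_def well_labeled_def)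

lemma placed_target_placed_edge:
  assumes "e \<in> edges H"
  shows "placed_target X \<beta> H f (placed_edge H f e) = f (tgt H e)"
proof -
  have "inv_into (edges H) (placed_edge H f) (placed_edge H f e) = e" "placed_edge H f e = (f (src H e), lab H e)"
    using inv_into_f_f[OF inj_on_placed_edge assms] by (simp_all add: placed_edge_def)
  then show ?thesis
    using Beta_edges[OF assms] by (simp add: placed_target_def)
qed

lemma is_lgraph_placed_graph: "is_lgraph (placed_graph X \<beta> H f)"
  unfolding placed_graph_def
proof (rule is_lgraph_letter_graph)
  let ?E = "X \<times> ({Beta} \<times> UNIV) \<union> placed_edge H f ` edges H" and ?T = "placed_target X \<beta> H f"
  fix p assume "p \<in> ?E"
  then consider x s where "p = (x, (Beta, s))" "x \<in> X" | e where "p = placed_edge H f e" "e \<in> edges H"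
    by auto
  then show "fst p \<in> X \<and> ?T p \<in> X \<and> (?T p, linv (snd p)) \<in> ?E
    \<and> ?T (?T p, linv (snd p)) = fst p"
  proof cases
    case (1 x s)
    define k where "k = letter_exp (Beta, s)"
    have Tp: "?T p = beta_pow X \<beta> k x" "snd p = (Beta, s)"
      using 1 by (simp_all add: placed_target_def k_def)
    have "?T (?T p, linv (snd p)) = beta_pow X \<beta> (- k) (beta_pow X \<beta> k x)"
      using Tp by (simp add: placed_target_def k_def)
    also have "\<dots> = x"
      using beta_pow_add[OF bij 1(2), of "- k" k] by simp
    finally show ?thesis
      using 1 Tp beta_pow_in[OF bij] by (simp add: linv_def)
  next
    case (2 e)
    note e = is_lgraphD[OF H(1) 2(2)]
    have "(?T p, linv (snd p)) = placed_edge H f (bar H e)"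
      using 2 e placed_target_placed_edge by (simp add: placed_edge_def)
    moreover have "?T (placed_edge H f (bar H e)) = fst p"
      using 2 e placed_target_placed_edge[OF e(1)] by (simp add: placed_edge_def)
    moreover have "fst p \<in> X" "?T p \<in> X"
      using 2 e placed_target_placed_edge f(2) by (auto simp: placed_edge_def)
    ultimately show ?thesis
      using e(1) by auto
  qed
qed

lemma labeled_on_placed_graph: "labeled_on n H \<Longrightarrow> labeled_on n (placed_graph X \<beta> H f)"
  by (auto simp: labeled_on_def placed_graph_def letter_graph_def placed_edge_def alphabet_def)

lemma lembedding_pre_graph_placed_graph:
  "lembedding (pre_graph X \<beta>) (placed_graph X \<beta> H f) id
     (\<lambda>(x, b). if b then (x, (Beta, True)) else (\<beta> x, (Beta, False)))"
  using bij unfolding lembedding_def lhom_def bij_betw_def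
  by (auto simp: placed_graph_def letter_graph_def pre_graph_def placed_target_def linv_def
      letter_exp_def inv_into_f_f inj_on_def split: if_splits)

lemma extension_placed_graph:
  assumes "labeled_on n H"
  shows "extension n X \<beta> (placed_graph X \<beta> H f)"
proof -
  have "well_labeled (placed_graph X \<beta> H f)"
    unfolding placed_graph_def by (rule well_labeled_letter_graph)
  moreover have "verts (placed_graph X \<beta> H f) = X"
    by (simp add: placed_graph_def letter_graph_def)
  ultimately show ?thesis
    unfolding extension_def
    using is_lgraph_placed_graph labeled_on_placed_graph[OF assms] lembedding_pre_graph_placed_graph
    by blast
qed

lemma lembedding_placed_graph: "lembedding H (placed_graph X \<beta> H f) f (placed_edge H f)"
  unfolding lembedding_def lhom_def
  using f inj_on_placed_edge placed_target_placed_edge is_lgraphD[OF H(1)]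
  by (auto simp: placed_graph_def letter_graph_def placed_edge_def)

end

lemma ex_shift_avoiding:
  fixes S A :: "int set"
  assumes "finite S" "finite A"
  obtains c where "\<And>a. a \<in> A \<Longrightarrow> c + a \<notin> S"
proof -
  have "finite ((\<lambda>(s, a). s - a) ` (S \<times> A))"
    using assms by simp
  then obtain c where "c \<notin> (\<lambda>(s, a). s - a) ` (S \<times> A)"
    using ex_new_if_finite[OF infinite_UNIV_int] by blast
  then show ?thesis
    using that by force
qed

theorem lemma9:
  fixes n :: nat and X :: "'x set" and \<beta> :: "'x \<Rightarrow> 'x"
    and w :: "letter list" and F :: "'x set"
  assumes "infinite X" and "countable X"
    and "bij_betw \<beta> X X" and "simply_transitive X \<beta>"
    and "set w \<subseteq> alphabet n"
    and "weakly_cyclically_reduced w"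
    and "\<exists>a \<in> set w. fst a \<noteq> Beta"
    and "finite F" and "F \<subseteq> X"
  shows "\<exists>G :: ('x, 'x \<times> letter) lgraph. extension n X \<beta> G \<and>
           (\<exists>f g. lembedding (cycle_graph w) G f g \<and> f ` verts (cycle_graph w) \<inter> F = {})"
proof -
  let ?C = "cycle_graph w"
  obtain h where h_inj: "inj_on h (verts ?C)"
    and h_Beta: "\<And>e. e \<in> edges ?C \<Longrightarrow> fst (lab ?C e) = Beta \<Longrightarrow>
      h (tgt ?C e) = h (src ?C e) + letter_exp (lab ?C e)"
    using cycle_graph_height[OF assms(6,7)] by blast
  obtain x0 where x0: "x0 \<in> X"
    using assms(1) infinite_imp_nonempty by blast
  \<comment> \<open>Infiniteness of \<open>X\<close> only supplies this base point.\<close>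
  have "finite ((\<lambda>k. beta_pow X \<beta> k x0) -` F)"
    using finite_vimageI[OF assms(8) inj_beta_pow[OF assms(3,4) x0]] .
  then obtain c where avoid: "\<And>v. v \<in> verts ?C \<Longrightarrow> beta_pow X \<beta> (c + h v) x0 \<notin> F"
    by (rule ex_shift_avoiding[of _ "h ` verts ?C"]) (auto simp: cycle_graph_simps)
  define f where "f = (\<lambda>v. beta_pow X \<beta> (c + h v) x0)"
  have f_inj: "inj_on f (verts ?C)" and f_X: "f ` verts ?C \<subseteq> X"
    using inj_on_orbit_map[OF assms(3,4) x0 h_inj] beta_pow_in[OF assms(3) x0]
    unfolding f_def by auto
  have f_Beta: "f (tgt ?C e) = beta_pow X \<beta> (letter_exp (lab ?C e)) (f (src ?C e))"
    if "e \<in> edges ?C" "fst (lab ?C e) = Beta" for e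
    using h_Beta[OF that] beta_pow_add[OF assms(3) x0, of "letter_exp (lab ?C e)" "c + h (src ?C e)"]
    by (simp add: f_def add_ac)
  note placement = assms(3) is_lgraph_cycle_graph well_labeled_cycle_graph[OF assms(6)] f_inj f_X f_Beta
  have "extension n X \<beta> (placed_graph X \<beta> ?C f)"
    by (rule extension_placed_graph[OF placement labeled_on_cycle_graph[OF assms(5)]])
  moreover have "lembedding ?C (placed_graph X \<beta> ?C f) f (placed_edge ?C f)"
    by (rule lembedding_placed_graph[OF placement])
  moreover have "f ` verts ?C \<inter> F = {}"
    using avoid by (auto simp: f_def)
  ultimately show ?thesis
    by blast
qed

end
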